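(* Let $G$ be a non-amenable discrete group and $\partial_F G$ its Furstenberg boundary. For every unital positive isometric $G$-equivariant embedding $\iota: C(\partial_F G)\to\ell^\infty(G)$, we have $\iota(C(\partial_F G))\cap c_0(G)=\{0\}$.
   Context: $\ell^\infty(G)$ carries the left translation action of $G$; $c_0(G)$ is the space of functions on $G$ vanishing at infinity. The Furstenberg boundary $\partial_F G$ is the universal $G$-boundary (minimal, strongly proximal compact $G$-space of which every $G$-boundary is a continuous equivariant image). *)

theory Defs
  imports "HOL-Analysis.Analysis" "HOL-Algebra.Group"
begin

definition Cfun :: "'x topology \<Rightarrow> ('x \<Rightarrow> complex) set" where
  "Cfun X = {f. continuous_map X euclidean f \<and> (\<forall>x. x \<notin> topspace X \<longrightarrow> f x = 0)}"

definition oneX :: "'x topology \<Rightarrow> 'x \<Rightarrow> complex" where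
  "oneX X = (\<lambda>x. if x \<in> topspace X then 1 else 0)"

definition linf :: "('g, 'b) monoid_scheme \<Rightarrow> ('g \<Rightarrow> complex) set" where
  "linf G = {\<phi>. (\<exists>B. \<forall>t\<in>carrier G. norm (\<phi> t) \<le> B) \<and> (\<forall>t. t \<notin> carrier G \<longrightarrow> \<phi> t = 0)}"

definition oneG :: "('g, 'b) monoid_scheme \<Rightarrow> 'g \<Rightarrow> complex" where
  "oneG G = (\<lambda>t. if t \<in> carrier G then 1 else 0)"

definition c0 :: "('g, 'b) monoid_scheme \<Rightarrow> ('g \<Rightarrow> complex) set" where
  "c0 G = {\<phi> \<in> linf G. \<forall>e>0. finite {t \<in> carrier G. norm (\<phi> t) \<ge> e}}"

definition supn :: "'a set \<Rightarrow> ('a \<Rightarrow> complex) \<Rightarrow> real" where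
  "supn S f = (SUP x\<in>S. norm (f x))"

definition cpos :: "complex \<Rightarrow> bool" where
  "cpos z \<longleftrightarrow> Im z = 0 \<and> Re z \<ge> 0"

definition ltrans :: "('g, 'b) monoid_scheme \<Rightarrow> 'g \<Rightarrow> ('g \<Rightarrow> 'c::zero) \<Rightarrow> 'g \<Rightarrow> 'c" where
  "ltrans G g \<phi> = (\<lambda>t. if t \<in> carrier G then \<phi> (inv\<^bsub>G\<^esub> g \<otimes>\<^bsub>G\<^esub> t) else 0)"

definition gspace :: "('g, 'b) monoid_scheme \<Rightarrow> 'x topology \<Rightarrow> ('g \<Rightarrow> 'x \<Rightarrow> 'x) \<Rightarrow> bool" where
  "gspace G X \<alpha> \<longleftrightarrow>
     (\<forall>g\<in>carrier G. continuous_map X X (\<alpha> g)) \<and>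
     (\<forall>x\<in>topspace X. \<alpha> \<one>\<^bsub>G\<^esub> x = x) \<and>
     (\<forall>g\<in>carrier G. \<forall>h\<in>carrier G. \<forall>x\<in>topspace X. \<alpha> (g \<otimes>\<^bsub>G\<^esub> h) x = \<alpha> g (\<alpha> h x))"

definition ctrans :: "('g, 'b) monoid_scheme \<Rightarrow> 'x topology \<Rightarrow> ('g \<Rightarrow> 'x \<Rightarrow> 'x) \<Rightarrow> 'g
                      \<Rightarrow> ('x \<Rightarrow> complex) \<Rightarrow> 'x \<Rightarrow> complex" where
  "ctrans G X \<alpha> g f = (\<lambda>x. if x \<in> topspace X then f (\<alpha> (inv\<^bsub>G\<^esub> g) x) else 0)"

definition minimal_gspace :: "('g, 'b) monoid_scheme \<Rightarrow> 'x topology \<Rightarrow> ('g \<Rightarrow> 'x \<Rightarrow> 'x) \<Rightarrow> bool" where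
  "minimal_gspace G X \<alpha> \<longleftrightarrow>
     (\<forall>C. closedin X C \<and> C \<noteq> {} \<and> (\<forall>g\<in>carrier G. \<forall>x\<in>C. \<alpha> g x \<in> C) \<longrightarrow> C = topspace X)"

text \<open>Probability (Radon) measures on compact X are represented as states on C(X).\<close>
definition cstate :: "'x topology \<Rightarrow> (('x \<Rightarrow> complex) \<Rightarrow> complex) \<Rightarrow> bool" where
  "cstate X \<mu> \<longleftrightarrow>
     (\<forall>f\<in>Cfun X. \<forall>h\<in>Cfun X. \<forall>a b. \<mu> (\<lambda>x. a * f x + b * h x) = a * \<mu> f + b * \<mu> h) \<and>
     (\<forall>f\<in>Cfun X. (\<forall>x. cpos (f x)) \<longrightarrow> cpos (\<mu> f)) \<and>
     \<mu> (oneX X) = 1"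

text \<open>Strongly proximal: the weak* closure of every orbit G.mu of a probability measure
  contains a point mass; (g.mu)(f) = mu(f o g).\<close>
definition strongly_proximal :: "('g, 'b) monoid_scheme \<Rightarrow> 'x topology \<Rightarrow> ('g \<Rightarrow> 'x \<Rightarrow> 'x) \<Rightarrow> bool" where
  "strongly_proximal G X \<alpha> \<longleftrightarrow>
     (\<forall>\<mu>. cstate X \<mu> \<longrightarrow>
        (\<exists>x\<in>topspace X. \<forall>F e. finite F \<and> F \<subseteq> Cfun X \<and> e > 0 \<longrightarrow>
            (\<exists>g\<in>carrier G. \<forall>f\<in>F.
               norm (\<mu> (\<lambda>y. if y \<in> topspace X then f (\<alpha> g y) else 0) - f x) < e)))"

definition gboundary :: "('g, 'b) monoid_scheme \<Rightarrow> 'x topology \<Rightarrow> ('g \<Rightarrow> 'x \<Rightarrow> 'x) \<Rightarrow> bool" where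
  "gboundary G X \<alpha> \<longleftrightarrow>
     gspace G X \<alpha> \<and> compact_space X \<and> Hausdorff_space X \<and> topspace X \<noteq> {} \<and>
     minimal_gspace G X \<alpha> \<and> strongly_proximal G X \<alpha>"

definition factor_map :: "('g, 'b) monoid_scheme \<Rightarrow> 'x topology \<Rightarrow> ('g \<Rightarrow> 'x \<Rightarrow> 'x)
                          \<Rightarrow> 'y topology \<Rightarrow> ('g \<Rightarrow> 'y \<Rightarrow> 'y) \<Rightarrow> ('x \<Rightarrow> 'y) \<Rightarrow> bool" where
  "factor_map G X \<alpha> Y \<beta> \<pi> \<longleftrightarrow>
     continuous_map X Y \<pi> \<and> \<pi> ` topspace X = topspace Y \<and>
     (\<forall>g\<in>carrier G. \<forall>x\<in>topspace X. \<pi> (\<alpha> g x) = \<beta> g (\<pi> x))"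

text \<open>Every G-boundary is a factor of beta G, hence is isomorphic to a
  G-boundary whose points are sets of ultrafilters on G, i.e. live in type 'g set set set;
  quantifying over those boundaries therefore covers all G-boundaries up to isomorphism.\<close>
definition furstenberg_boundary :: "('g, 'b) monoid_scheme \<Rightarrow> 'x topology \<Rightarrow> ('g \<Rightarrow> 'x \<Rightarrow> 'x) \<Rightarrow> bool" where
  "furstenberg_boundary G X \<alpha> \<longleftrightarrow>
     gboundary G X \<alpha> \<and>
     (\<forall>(Y :: 'g set set set topology) \<beta>. gboundary G Y \<beta> \<longrightarrow> (\<exists>\<pi>. factor_map G X \<alpha> Y \<beta> \<pi>))"

definition rlinf :: "('g, 'b) monoid_scheme \<Rightarrow> ('g \<Rightarrow> real) set" where
  "rlinf G = {f. (\<exists>B. \<forall>t\<in>carrier G. \<bar>f t\<bar> \<le> B) \<and> (\<forall>t. t \<notin> carrier G \<longrightarrow> f t = 0)}"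

definition amenable :: "('g, 'b) monoid_scheme \<Rightarrow> bool" where
  "amenable G \<longleftrightarrow> (\<exists>m :: ('g \<Rightarrow> real) \<Rightarrow> real.
     (\<forall>f\<in>rlinf G. \<forall>h\<in>rlinf G. \<forall>a b. m (\<lambda>t. a * f t + b * h t) = a * m f + b * m h) \<and>
     (\<forall>f\<in>rlinf G. (\<forall>t. f t \<ge> 0) \<longrightarrow> m f \<ge> 0) \<and>
     m (\<lambda>t. if t \<in> carrier G then 1 else 0) = 1 \<and>
     (\<forall>g\<in>carrier G. \<forall>f\<in>rlinf G. m (ltrans G g f) = m f))"

definition upie_embedding :: "('g, 'b) monoid_scheme \<Rightarrow> 'x topology \<Rightarrow> ('g \<Rightarrow> 'x \<Rightarrow> 'x)
                               \<Rightarrow> (('x \<Rightarrow> complex) \<Rightarrow> ('g \<Rightarrow> complex)) \<Rightarrow> bool" where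
  "upie_embedding G X \<alpha> \<iota> \<longleftrightarrow>
     \<iota> ` Cfun X \<subseteq> linf G \<and>
     (\<forall>f\<in>Cfun X. \<forall>h\<in>Cfun X. \<forall>a b. \<iota> (\<lambda>x. a * f x + b * h x) = (\<lambda>t. a * \<iota> f t + b * \<iota> h t)) \<and>
     \<iota> (oneX X) = oneG G \<and>
     (\<forall>f\<in>Cfun X. (\<forall>x. cpos (f x)) \<longrightarrow> (\<forall>t. cpos (\<iota> f t))) \<and>
     (\<forall>f\<in>Cfun X. supn (carrier G) (\<iota> f) = supn (topspace X) f) \<and>
     (\<forall>g\<in>carrier G. \<forall>f\<in>Cfun X. \<iota> (ctrans G X \<alpha> g f) = ltrans G g (\<iota> f))"

end

theory Submission
  imports Defs
begin

text \<open>
  Let \<iota> embed C(X) into ell-infinity(G), where X is a G-boundary.  Call a point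
  y of X approximable if evaluation at y is a weak* limit of the states h \<mapsto> \<iota> h s, s \<in> G.
  Strong proximality, applied to the state h \<mapsto> \<iota> h 1, produces one approximable point; the
  approximable points form a closed G-invariant set, so by minimality every point is
  approximable.  If \<iota> f lies in c_0(G) and f x \<noteq> 0, the finitely many s where \<iota> f is large
  force evaluation at x to be attained exactly: \<iota> h s = h x for one s and all h.  By
  equivariance \<iota> f (g s) = f (g x), so only finitely many g move x into the open set where
  |f| > |f x|/2.  Minimality then makes x, hence every point, isolated; compactness makes X
  finite, and counting the fibres of g \<mapsto> g x makes G finite.  Finite groups are amenable,
  so for non-amenable G the only element of \<iota>(C(X)) \<inter> c_0(G) is 0.
\<close>

section \<open>Group actions and the induced action on C(X)\<close>

lemma gspace_in_topspace:
  assumes "gspace G X \<alpha>" "g \<in> carrier G" "x \<in> topspace X"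
  shows "\<alpha> g x \<in> topspace X"
  using assms continuous_map_image_subset_topspace unfolding gspace_def by blast

lemma gspace_inv_cancel:
  assumes "group G" "gspace G X \<alpha>" "g \<in> carrier G" "z \<in> topspace X"
  shows "\<alpha> (inv\<^bsub>G\<^esub> g) (\<alpha> g z) = z"
proof -
  have "\<alpha> (inv\<^bsub>G\<^esub> g) (\<alpha> g z) = \<alpha> (inv\<^bsub>G\<^esub> g \<otimes>\<^bsub>G\<^esub> g) z"
    using assms unfolding gspace_def by (simp add: group.inv_closed)
  also have "\<dots> = z" using assms unfolding gspace_def by (simp add: group.l_inv)
  finally show ?thesis .
qed

lemma ctrans_inv_eq:
  assumes "group G" "g \<in> carrier G"
  shows "ctrans G X \<alpha> (inv\<^bsub>G\<^esub> g) f = (\<lambda>y. if y \<in> topspace X then f (\<alpha> g y) else 0)"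
  unfolding ctrans_def group.inv_inv[OF assms] ..

lemma ctrans_Cfun:
  assumes "group G" "gspace G X \<alpha>" "g \<in> carrier G" "f \<in> Cfun X"
  shows "ctrans G X \<alpha> g f \<in> Cfun X"
proof -
  have "continuous_map X X (\<alpha> (inv\<^bsub>G\<^esub> g))"
    using assms unfolding gspace_def by (simp add: group.inv_closed)
  moreover have "continuous_map X euclidean f" using assms(4) unfolding Cfun_def by auto
  ultimately have "continuous_map X euclidean (f \<circ> \<alpha> (inv\<^bsub>G\<^esub> g))"
    by (rule continuous_map_compose)
  then have "continuous_map X euclidean (ctrans G X \<alpha> g f)"
    by (rule continuous_map_eq) (simp add: ctrans_def)
  then show ?thesis unfolding Cfun_def ctrans_def by auto
qed

lemma upie_linear:
  assumes "upie_embedding G X \<alpha> \<iota>" "f \<in> Cfun X" "h \<in> Cfun X"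
  shows "\<iota> (\<lambda>x. a * f x + b * h x) = (\<lambda>t. a * \<iota> f t + b * \<iota> h t)"
  using assms unfolding upie_embedding_def by blast

lemma upie_zero: "upie_embedding G X \<alpha> \<iota> \<Longrightarrow> \<iota> (\<lambda>x. 0) = (\<lambda>t. 0)"
  using upie_linear[of G X \<alpha> \<iota> "\<lambda>x. 0" "\<lambda>x. 0" 0 0] by (simp add: Cfun_def)

lemma upie_unit: "upie_embedding G X \<alpha> \<iota> \<Longrightarrow> \<iota> (oneX X) = oneG G"
  unfolding upie_embedding_def by blast

lemma upie_positive:
  assumes "upie_embedding G X \<alpha> \<iota>" "f \<in> Cfun X" "\<forall>x. cpos (f x)"
  shows "cpos (\<iota> f t)"
  using assms unfolding upie_embedding_def by blast

lemma upie_evaluation_state: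
  assumes emb: "upie_embedding G X \<alpha> \<iota>" and s: "s \<in> carrier G"
  shows "cstate X (\<lambda>h. \<iota> h s)"
  unfolding cstate_def
proof (intro conjI ballI allI impI)
  fix f h a b assume "f \<in> Cfun X" "h \<in> Cfun X"
  then show "\<iota> (\<lambda>x. a * f x + b * h x) s = a * \<iota> f s + b * \<iota> h s"
    by (simp add: upie_linear[OF emb])
next
  fix f assume "f \<in> Cfun X" "\<forall>x. cpos (f x)"
  then show "cpos (\<iota> f s)" by (rule upie_positive[OF emb])
next
  show "\<iota> (oneX X) s = 1" using s by (simp add: upie_unit[OF emb] oneG_def)
qed

lemma upie_shift:
  assumes "group G" "upie_embedding G X \<alpha> \<iota>" "g \<in> carrier G" "s \<in> carrier G" "f \<in> Cfun X"
  shows "\<iota> f (g \<otimes>\<^bsub>G\<^esub> s) = \<iota> (ctrans G X \<alpha> (inv\<^bsub>G\<^esub> g) f) s"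
proof -
  have "\<iota> (ctrans G X \<alpha> (inv\<^bsub>G\<^esub> g) f) = ltrans G (inv\<^bsub>G\<^esub> g) (\<iota> f)"
    using assms unfolding upie_embedding_def by (simp add: group.inv_closed)
  then show ?thesis using assms by (simp add: ltrans_def group.inv_inv)
qed

text \<open>In a minimal G-space every orbit meets every nonempty open set: otherwise the points
  whose orbit avoids the open set would form a proper closed invariant subset.\<close>
lemma minimal_orbit_hits_open:
  assumes "group G" "gspace G X \<alpha>" "minimal_gspace G X \<alpha>"
    and "openin X W" "W \<noteq> {}" "y \<in> topspace X"
  shows "\<exists>g\<in>carrier G. \<alpha> g y \<in> W"
proof (rule ccontr)
  assume miss: "\<not> (\<exists>g\<in>carrier G. \<alpha> g y \<in> W)"
  interpret group G by fact
  define C where "C = {z \<in> topspace X. \<forall>g\<in>carrier G. \<alpha> g z \<notin> W}"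
  have "openin X (\<Union>g\<in>carrier G. {z \<in> topspace X. \<alpha> g z \<in> W})"
    using assms(2,4) unfolding gspace_def by (blast intro: openin_continuous_map_preimage)
  moreover have "C = topspace X - (\<Union>g\<in>carrier G. {z \<in> topspace X. \<alpha> g z \<in> W})"
    unfolding C_def by blast
  ultimately have "closedin X C" by (simp add: closedin_diff)
  moreover have "C \<noteq> {}" using miss assms(6) unfolding C_def by blast
  moreover have "\<alpha> h z \<in> C" if h: "h \<in> carrier G" and z: "z \<in> C" for h z
  proof -
    have zX: "z \<in> topspace X" using z unfolding C_def by blast
    have "\<alpha> g (\<alpha> h z) = \<alpha> (g \<otimes>\<^bsub>G\<^esub> h) z" if "g \<in> carrier G" for g
      using assms(2) h that zX unfolding gspace_def by simp
    then show ?thesis using z h gspace_in_topspace[OF assms(2) h zX] unfolding C_def by auto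
  qed
  ultimately have C: "C = topspace X" using assms(3) unfolding minimal_gspace_def by blast
  obtain w where w: "w \<in> W" using assms(5) by blast
  then have "w \<in> C" using C openin_subset[OF assms(4)] by blast
  moreover have "\<alpha> \<one>\<^bsub>G\<^esub> w = w" using assms(2) w \<open>w \<in> C\<close> unfolding gspace_def C_def by blast
  ultimately show False using w unfolding C_def by force
qed

section \<open>Finite groups are amenable\<close>

text \<open>The normalised counting measure is a left-invariant mean.\<close>
lemma finite_group_amenable:
  assumes grp: "group G" and fin: "finite (carrier G)"
  shows "amenable G"
proof -
  interpret group G by fact
  define m where "m = (\<lambda>f :: 'a \<Rightarrow> real. (\<Sum>t\<in>carrier G. f t) / real (card (carrier G)))"
  have card_pos: "real (card (carrier G)) > 0" using fin one_closed card_gt_0_iff by fastforce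
  have invariant: "m (ltrans G g f) = m f" if g: "g \<in> carrier G" for g f
  proof -
    have "(\<Sum>t\<in>carrier G. ltrans G g f t) = (\<Sum>t\<in>carrier G. f (inv\<^bsub>G\<^esub> g \<otimes>\<^bsub>G\<^esub> t))"
      by (rule sum.cong) (auto simp: ltrans_def)
    also have "\<dots> = (\<Sum>t\<in>(\<lambda>x. inv\<^bsub>G\<^esub> g \<otimes>\<^bsub>G\<^esub> x) ` carrier G. f t)"
      by (rule sum.reindex[symmetric, unfolded comp_def]) (simp add: inj_on_cmult g)
    also have "\<dots> = (\<Sum>t\<in>carrier G. f t)" by (simp add: surj_const_mult g)
    finally show ?thesis unfolding m_def by simp
  qed
  have "\<forall>f\<in>rlinf G. \<forall>h\<in>rlinf G. \<forall>a b. m (\<lambda>t. a * f t + b * h t) = a * m f + b * m h"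
    unfolding m_def by (simp add: sum.distrib sum_distrib_left[symmetric] add_divide_distrib)
  moreover have "\<forall>f\<in>rlinf G. (\<forall>t. f t \<ge> 0) \<longrightarrow> m f \<ge> 0"
    unfolding m_def by (simp add: sum_nonneg)
  moreover have "m (\<lambda>t. if t \<in> carrier G then 1 else 0) = 1"
    unfolding m_def using card_pos by simp
  ultimately show ?thesis unfolding amenable_def using invariant by blast
qed

section \<open>Points at which \<iota> is approximately evaluation\<close>

definition approximable ::
    "('g, 'b) monoid_scheme \<Rightarrow> 'x topology \<Rightarrow> (('x \<Rightarrow> complex) \<Rightarrow> 'g \<Rightarrow> complex) \<Rightarrow> 'x \<Rightarrow> bool" where
  "approximable G X \<iota> y \<longleftrightarrow>
     (\<forall>F e. finite F \<and> F \<subseteq> Cfun X \<and> e > 0 \<longrightarrow> (\<exists>s\<in>carrier G. \<forall>h\<in>F. norm (\<iota> h s - h y) < e))"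

lemma approximableD:
  assumes "approximable G X \<iota> y" "finite F" "F \<subseteq> Cfun X" "e > 0"
  obtains s where "s \<in> carrier G" "\<And>h. h \<in> F \<Longrightarrow> norm (\<iota> h s - h y) < e"
proof -
  have "finite F \<and> F \<subseteq> Cfun X \<and> e > 0" using assms(2-4) by blast
  from assms(1)[unfolded approximable_def, rule_format, OF this] show ?thesis
    using that by blast
qed

text \<open>Strong proximality applied to the state h \<mapsto> \<iota> h 1 yields an approximable point,
  since by equivariance its translates are the states h \<mapsto> \<iota> h g.\<close>
lemma approximable_exists:
  assumes grp: "group G" and sp: "strongly_proximal G X \<alpha>" and emb: "upie_embedding G X \<alpha> \<iota>"
  shows "\<exists>y\<in>topspace X. approximable G X \<iota> y"
proof -
  interpret group G by fact
  define \<mu> where "\<mu> = (\<lambda>h. \<iota> h \<one>\<^bsub>G\<^esub>)"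
  have "cstate X \<mu>" unfolding \<mu>_def by (rule upie_evaluation_state[OF emb one_closed])
  from sp[unfolded strongly_proximal_def, rule_format, OF this]
  obtain y where y: "y \<in> topspace X" and lim: "\<forall>F e. finite F \<and> F \<subseteq> Cfun X \<and> e > 0 \<longrightarrow>
      (\<exists>g\<in>carrier G. \<forall>h\<in>F. norm (\<mu> (\<lambda>z. if z \<in> topspace X then h (\<alpha> g z) else 0) - h y) < e)"
    by (elim bexE) (rule that)
  have translate: "\<mu> (\<lambda>z. if z \<in> topspace X then h (\<alpha> g z) else 0) = \<iota> h g"
    if "g \<in> carrier G" "h \<in> Cfun X" for g h
    using upie_shift[OF grp emb that(1) one_closed that(2)] that(1)
    unfolding \<mu>_def ctrans_inv_eq[OF grp that(1)] by simp
  have "approximable G X \<iota> y"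
    unfolding approximable_def
  proof (intro allI impI)
    fix F e assume Fe: "finite F \<and> F \<subseteq> Cfun X \<and> (e::real) > 0"
    then obtain g where g: "g \<in> carrier G"
      and close: "\<forall>h\<in>F. norm (\<mu> (\<lambda>z. if z \<in> topspace X then h (\<alpha> g z) else 0) - h y) < e"
      using lim by blast
    have "\<forall>h\<in>F. norm (\<iota> h g - h y) < e"
    proof
      fix h assume h: "h \<in> F"
      then have "h \<in> Cfun X" using Fe by blast
      then show "norm (\<iota> h g - h y) < e" using close[rule_format, OF h] translate[OF g] by simp
    qed
    then show "\<exists>s\<in>carrier G. \<forall>h\<in>F. norm (\<iota> h s - h y) < e" using g by blast
  qed
  then show ?thesis using y by blast
qed

text \<open>Non-approximability at y is witnessed by finitely many continuous functions, and so
  persists on a neighbourhood of y.\<close>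
lemma approximable_closed: "closedin X {y \<in> topspace X. approximable G X \<iota> y}"
proof -
  have "openin X (topspace X - {y \<in> topspace X. approximable G X \<iota> y})"
    unfolding openin_subopen[of X "topspace X - _"]
  proof
    fix y assume y: "y \<in> topspace X - {y \<in> topspace X. approximable G X \<iota> y}"
    then obtain F e where F: "finite F" "F \<subseteq> Cfun X" and e: "e > 0"
      and far: "\<And>s. s \<in> carrier G \<Longrightarrow> \<exists>h\<in>F. norm (\<iota> h s - h y) \<ge> e"
      unfolding approximable_def by (auto simp: not_less)
    define T where "T = (\<Inter>h\<in>F. {z \<in> topspace X. h z \<in> ball (h y) (e/2)}) \<inter> topspace X"
    have "openin X T" unfolding T_def
    proof (rule openin_INT[OF F(1)])
      fix h assume "h \<in> F"
      then have "continuous_map X euclidean h" using F(2) unfolding Cfun_def by blast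
      then show "openin X {z \<in> topspace X. h z \<in> ball (h y) (e/2)}"
        by (rule openin_continuous_map_preimage) simp
    qed
    moreover have "y \<in> T" using y e unfolding T_def by simp
    moreover have "\<not> approximable G X \<iota> z" if z: "z \<in> T" for z
    proof
      assume app: "approximable G X \<iota> z"
      have "e/2 > 0" using e by simp
      then obtain s where s: "s \<in> carrier G" and close: "\<And>h. h \<in> F \<Longrightarrow> norm (\<iota> h s - h z) < e/2"
        by (rule approximableD[OF app F]) blast
      obtain h where h: "h \<in> F" and "norm (\<iota> h s - h y) \<ge> e" using far[OF s] by blast
      moreover have "norm (\<iota> h s - h y) \<le> norm (\<iota> h s - h z) + norm (h z - h y)"
        by (rule norm_diff_triangle_le[of _ "h z"]) simp_all
      moreover have "norm (h z - h y) < e/2"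
        using z h unfolding T_def by (simp add: dist_norm norm_minus_commute)
      ultimately show False using close[OF h] by linarith
    qed
    ultimately show "\<exists>T. openin X T \<and> y \<in> T \<and> T \<subseteq> topspace X - {y \<in> topspace X. approximable G X \<iota> y}"
      unfolding T_def by blast
  qed
  then show ?thesis unfolding closedin_def by blast
qed

text \<open>Approximability at y transfers to g y: approximate the translates h(g \<cdot>) at y.\<close>
lemma approximable_translate:
  assumes grp: "group G" and gs: "gspace G X \<alpha>" and emb: "upie_embedding G X \<alpha> \<iota>"
    and g: "g \<in> carrier G" and y: "y \<in> topspace X" and app: "approximable G X \<iota> y"
  shows "approximable G X \<iota> (\<alpha> g y)"
  unfolding approximable_def
proof (intro allI impI)
  interpret group G by fact
  fix F e assume H: "finite F \<and> F \<subseteq> Cfun X \<and> (e::real) > 0"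
  let ?T = "ctrans G X \<alpha> (inv\<^bsub>G\<^esub> g)"
  have "finite (?T ` F)" "?T ` F \<subseteq> Cfun X"
    using H ctrans_Cfun[OF grp gs inv_closed[OF g]] by auto
  moreover have "e > 0" using H by blast
  ultimately obtain s where s: "s \<in> carrier G" and close: "\<And>h. h \<in> ?T ` F \<Longrightarrow> norm (\<iota> h s - h y) < e"
    by (rule approximableD[OF app]) blast
  have "norm (\<iota> h (g \<otimes>\<^bsub>G\<^esub> s) - h (\<alpha> g y)) < e" if h: "h \<in> F" for h
  proof -
    have "h \<in> Cfun X" using h H by blast
    then have "\<iota> h (g \<otimes>\<^bsub>G\<^esub> s) = \<iota> (?T h) s" by (rule upie_shift[OF grp emb g s])
    moreover have "?T h y = h (\<alpha> g y)" using y by (simp add: ctrans_inv_eq[OF grp g])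
    ultimately show ?thesis using close[of "?T h"] h by simp
  qed
  then show "\<exists>s\<in>carrier G. \<forall>h\<in>F. norm (\<iota> h s - h (\<alpha> g y)) < e"
    using g s by blast
qed

lemma boundary_all_approximable:
  assumes grp: "group G" and bd: "gboundary G X \<alpha>" and emb: "upie_embedding G X \<alpha> \<iota>"
    and y: "y \<in> topspace X"
  shows "approximable G X \<iota> y"
proof -
  have gs: "gspace G X \<alpha>" and "minimal_gspace G X \<alpha>" "strongly_proximal G X \<alpha>"
    using bd unfolding gboundary_def by simp_all
  moreover have "closedin X {y \<in> topspace X. approximable G X \<iota> y}"
    by (rule approximable_closed)
  moreover have "{y \<in> topspace X. approximable G X \<iota> y} \<noteq> {}"
    using approximable_exists[OF grp _ emb] \<open>strongly_proximal G X \<alpha>\<close> by blast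
  moreover have "\<forall>g\<in>carrier G. \<forall>z\<in>{y \<in> topspace X. approximable G X \<iota> y}.
      \<alpha> g z \<in> {y \<in> topspace X. approximable G X \<iota> y}"
    using approximable_translate[OF grp gs emb] gspace_in_topspace[OF gs] by blast
  ultimately show ?thesis using y unfolding minimal_gspace_def by blast
qed

section \<open>A nonzero element of \<iota>(C(X)) in c_0(G) makes G finite\<close>

lemma c0_finite_level_set:
  assumes "\<phi> \<in> c0 G" "c > 0"
  shows "finite {t \<in> carrier G. c \<le> norm (\<phi> t)}"
proof -
  have "\<forall>e>0. finite {t \<in> carrier G. norm (\<phi> t) \<ge> e}" using assms(1) unfolding c0_def by blast
  then show ?thesis using assms(2) by blast
qed

text \<open>If \<iota> f vanishes at infinity and f x \<noteq> 0, evaluation at x is attained exactly: every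
  approximating s must lie in the finite set where |\<iota> f| \<ge> |f x|/2, and finitely many
  candidates cannot each be excluded by one test function.\<close>
lemma c0_exact_evaluation:
  assumes app: "approximable G X \<iota> x" and f: "f \<in> Cfun X" and c0: "\<iota> f \<in> c0 G"
    and fx: "f x \<noteq> 0"
  shows "\<exists>s\<in>carrier G. \<forall>h\<in>Cfun X. \<iota> h s = h x"
proof (rule ccontr)
  assume no_exact: "\<not> (\<exists>s\<in>carrier G. \<forall>h\<in>Cfun X. \<iota> h s = h x)"
  define c where "c = norm (f x) / 2"
  define K where "K = {t \<in> carrier G. c \<le> norm (\<iota> f t)}"
  have c: "c > 0" using fx unfolding c_def by simp
  have K: "finite K" unfolding K_def by (rule c0_finite_level_set[OF c0 c])
  have "\<forall>s\<in>K. \<exists>h. h \<in> Cfun X \<and> \<iota> h s \<noteq> h x" using no_exact unfolding K_def by blast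
  then obtain H where H: "\<forall>s\<in>K. H s \<in> Cfun X \<and> \<iota> (H s) s \<noteq> H s x" by metis
  define gaps where "gaps = insert c ((\<lambda>s. norm (\<iota> (H s) s - H s x)) ` K)"
  define e where "e = Min gaps"
  have gaps: "finite gaps" "gaps \<noteq> {}" "\<forall>d\<in>gaps. d > 0" using K c H unfolding gaps_def by auto
  have e_le_c: "e \<le> c" and e_le_gap: "\<And>s. s \<in> K \<Longrightarrow> e \<le> norm (\<iota> (H s) s - H s x)"
    unfolding e_def using gaps(1) by (simp_all add: gaps_def)
  have "finite (insert f (H ` K))" "insert f (H ` K) \<subseteq> Cfun X" using K f H by auto
  moreover have "e > 0" unfolding e_def using gaps by (simp add: Min_gr_iff)
  ultimately obtain s where s: "s \<in> carrier G"
    and close: "\<And>h. h \<in> insert f (H ` K) \<Longrightarrow> norm (\<iota> h s - h x) < e"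
    by (rule approximableD[OF app]) blast
  have "norm (f x) \<le> norm (\<iota> f s) + norm (\<iota> f s - f x)"
    by (metis norm_minus_commute norm_triangle_sub)
  then have "s \<in> K" using close[of f] e_le_c s unfolding K_def c_def by simp
  then show False using close[of "H s"] e_le_gap[of s] by simp
qed

text \<open>If \<iota> is exact evaluation at x in the point s, equivariance gives \<iota> f (g s) = f (g x);
  as \<iota> f vanishes at infinity, only finitely many g move x to where |f| \<ge> c.\<close>
lemma exact_point_finite_returns:
  assumes grp: "group G" and gs: "gspace G X \<alpha>" and emb: "upie_embedding G X \<alpha> \<iota>"
    and s: "s \<in> carrier G" and exact: "\<forall>h\<in>Cfun X. \<iota> h s = h x" and x: "x \<in> topspace X"
    and f: "f \<in> Cfun X" and c0: "\<iota> f \<in> c0 G" and c: "c > 0"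
  shows "finite {g \<in> carrier G. c \<le> norm (f (\<alpha> g x))}"
proof -
  interpret group G by fact
  define K where "K = {t \<in> carrier G. c \<le> norm (\<iota> f t)}"
  have "finite K" unfolding K_def by (rule c0_finite_level_set[OF c0 c])
  have orbit: "\<iota> f (g \<otimes>\<^bsub>G\<^esub> s) = f (\<alpha> g x)" if g: "g \<in> carrier G" for g
  proof -
    have "\<iota> f (g \<otimes>\<^bsub>G\<^esub> s) = \<iota> (ctrans G X \<alpha> (inv\<^bsub>G\<^esub> g) f) s" by (rule upie_shift[OF grp emb g s f])
    also have "\<dots> = ctrans G X \<alpha> (inv\<^bsub>G\<^esub> g) f x"
      using exact ctrans_Cfun[OF grp gs inv_closed[OF g] f] by blast
    also have "\<dots> = f (\<alpha> g x)" using x by (simp add: ctrans_inv_eq[OF grp g])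
    finally show ?thesis .
  qed
  have "{g \<in> carrier G. c \<le> norm (f (\<alpha> g x))} \<subseteq> (\<lambda>k. k \<otimes>\<^bsub>G\<^esub> inv\<^bsub>G\<^esub> s) ` K"
  proof
    fix g assume "g \<in> {g \<in> carrier G. c \<le> norm (f (\<alpha> g x))}"
    then have g: "g \<in> carrier G" and "g \<otimes>\<^bsub>G\<^esub> s \<in> K" unfolding K_def using orbit s by auto
    moreover have "g = (g \<otimes>\<^bsub>G\<^esub> s) \<otimes>\<^bsub>G\<^esub> inv\<^bsub>G\<^esub> s" using g s by (simp add: m_assoc)
    ultimately show "g \<in> (\<lambda>k. k \<otimes>\<^bsub>G\<^esub> inv\<^bsub>G\<^esub> s) ` K" by blast
  qed
  then show ?thesis by (rule finite_surj[OF \<open>finite K\<close>])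
qed

text \<open>In a minimal Hausdorff G-space, if the orbit of x returns to a neighbourhood U of x
  only finitely often, then x is isolated: U minus the finitely many orbit points in it is
  an open set missing the orbit, hence empty.\<close>
lemma isolated_of_finite_returns:
  assumes grp: "group G" and gs: "gspace G X \<alpha>" and mn: "minimal_gspace G X \<alpha>"
    and hd: "Hausdorff_space X" and U: "openin X U" "x \<in> U"
    and ret: "finite {g \<in> carrier G. \<alpha> g x \<in> U}"
  shows "openin X {x}"
proof -
  define Y where "Y = (\<lambda>g. \<alpha> g x) ` {g \<in> carrier G. \<alpha> g x \<in> U}"
  have x: "x \<in> topspace X" using U openin_subset by blast
  have Y: "finite Y" "Y \<subseteq> U" using ret unfolding Y_def by auto
  then have Y_top: "Y \<subseteq> topspace X" using U(1) openin_subset by blast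
  have no_return: "U - Y = {}"
  proof (rule ccontr)
    assume "U - Y \<noteq> {}"
    moreover have "openin X (U - Y)" using U(1) closedin_Hausdorff_finite[OF hd Y_top Y(1)] by blast
    ultimately obtain g where "g \<in> carrier G" "\<alpha> g x \<in> U - Y"
      using minimal_orbit_hits_open[OF grp gs mn _ _ x] by blast
    then show False unfolding Y_def by blast
  qed
  have "openin X (U - (Y - {x}))"
    using U(1) closedin_Hausdorff_finite[OF hd _ finite_Diff[OF Y(1)]] Y_top by blast
  moreover have "U - (Y - {x}) = {x}" using no_return U(2) by blast
  ultimately show ?thesis by simp
qed

text \<open>A compact minimal G-space with an isolated point is finite: every point is moved onto
  the isolated point, so every point is isolated.\<close>
lemma finite_of_isolated_point:
  assumes grp: "group G" and gs: "gspace G X \<alpha>" and mn: "minimal_gspace G X \<alpha>"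
    and cpt: "compact_space X" and iso: "openin X {x}"
  shows "finite (topspace X)"
proof -
  have "openin X {y}" if y: "y \<in> topspace X" for y
  proof -
    obtain g where g: "g \<in> carrier G" and gy: "\<alpha> g y = x"
      using minimal_orbit_hits_open[OF grp gs mn iso _ y] by blast
    have "{z \<in> topspace X. \<alpha> g z \<in> {x}} = {y}"
    proof (intro equalityI subsetI)
      fix z assume "z \<in> {z \<in> topspace X. \<alpha> g z \<in> {x}}"
      then have "z \<in> topspace X" "\<alpha> g z = \<alpha> g y" using gy by auto
      then show "z \<in> {y}" using gspace_inv_cancel[OF grp gs g] y by (metis singletonI)
    qed (use y gy in auto)
    moreover have "openin X {z \<in> topspace X. \<alpha> g z \<in> {x}}"
      using gs g iso unfolding gspace_def by (blast intro: openin_continuous_map_preimage)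
    ultimately show ?thesis by simp
  qed
  then have "discrete_topology (topspace X) = X" by (simp add: discrete_topology_unique)
  then show ?thesis using cpt compact_space_discrete_topology by metis
qed

text \<open>On a finite G-space, if the orbit of x returns to a set containing x only finitely
  often, then G is finite: each fibre of g \<mapsto> g x is a translate of the stabiliser of x,
  which lies in the finite set of returns.\<close>
lemma finite_group_of_finite_returns:
  assumes grp: "group G" and gs: "gspace G X \<alpha>" and fin: "finite (topspace X)"
    and x: "x \<in> topspace X" "x \<in> U" and ret: "finite {g \<in> carrier G. \<alpha> g x \<in> U}"
  shows "finite (carrier G)"
proof -
  interpret group G by fact
  let ?R = "{g \<in> carrier G. \<alpha> g x \<in> U}"
  have fibre: "finite {g \<in> carrier G. \<alpha> g x = y}" for y
  proof (cases "\<exists>g0\<in>carrier G. \<alpha> g0 x = y")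
    case True
    then obtain g0 where g0: "g0 \<in> carrier G" "\<alpha> g0 x = y" by blast
    have "{g \<in> carrier G. \<alpha> g x = y} \<subseteq> (\<lambda>b. g0 \<otimes>\<^bsub>G\<^esub> b) ` ?R"
    proof
      fix g assume "g \<in> {g \<in> carrier G. \<alpha> g x = y}"
      then have g: "g \<in> carrier G" and gx: "\<alpha> g x = \<alpha> g0 x" using g0 by auto
      have "\<alpha> (inv\<^bsub>G\<^esub> g0 \<otimes>\<^bsub>G\<^esub> g) x = \<alpha> (inv\<^bsub>G\<^esub> g0) (\<alpha> g0 x)"
        using gs g g0 x gx unfolding gspace_def by simp
      then have "inv\<^bsub>G\<^esub> g0 \<otimes>\<^bsub>G\<^esub> g \<in> ?R" using gspace_inv_cancel[OF grp gs g0(1) x(1)] g g0 x by simp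
      moreover have "g = g0 \<otimes>\<^bsub>G\<^esub> (inv\<^bsub>G\<^esub> g0 \<otimes>\<^bsub>G\<^esub> g)" using g g0 by (simp add: m_assoc[symmetric])
      ultimately show "g \<in> (\<lambda>b. g0 \<otimes>\<^bsub>G\<^esub> b) ` ?R" by blast
    qed
    then show ?thesis by (rule finite_surj[OF ret])
  next
    case False
    then have "{g \<in> carrier G. \<alpha> g x = y} = {}" by blast
    then show ?thesis by (simp only: finite.emptyI)
  qed
  have fibres: "carrier G = (\<Union>y\<in>topspace X. {g \<in> carrier G. \<alpha> g x = y})"
    using gspace_in_topspace[OF gs _ x(1)] by blast
  show ?thesis by (subst fibres) (rule finite_UN_I[OF fin fibre])
qed

lemma c0_element_forces_finite_group:
  assumes grp: "group G" and bd: "gboundary G X \<alpha>" and emb: "upie_embedding G X \<alpha> \<iota>"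
    and f: "f \<in> Cfun X" and c0: "\<iota> f \<in> c0 G" and x: "x \<in> topspace X" and fx: "f x \<noteq> 0"
  shows "finite (carrier G)"
proof -
  have gs: "gspace G X \<alpha>" and mn: "minimal_gspace G X \<alpha>"
    and hd: "Hausdorff_space X" and cpt: "compact_space X"
    using bd unfolding gboundary_def by simp_all
  define c where "c = norm (f x) / 2"
  define U where "U = {z \<in> topspace X. f z \<in> - cball 0 c}"
  have c: "c > 0" using fx unfolding c_def by simp
  have "continuous_map X euclidean f" using f unfolding Cfun_def by blast
  then have "openin X U"
    unfolding U_def by (rule openin_continuous_map_preimage) (simp add: open_Compl)
  moreover have "x \<in> U" using x fx unfolding U_def c_def by simp
  ultimately have U: "openin X U" "x \<in> U" .
  obtain s where s: "s \<in> carrier G" and exact: "\<forall>h\<in>Cfun X. \<iota> h s = h x"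
    using c0_exact_evaluation[OF boundary_all_approximable[OF grp bd emb x] f c0 fx] by blast
  have "{g \<in> carrier G. \<alpha> g x \<in> U} \<subseteq> {g \<in> carrier G. c \<le> norm (f (\<alpha> g x))}"
    unfolding U_def by auto
  then have ret: "finite {g \<in> carrier G. \<alpha> g x \<in> U}"
    using exact_point_finite_returns[OF grp gs emb s exact x f c0 c] by (rule finite_subset)
  have "finite (topspace X)"
    using finite_of_isolated_point[OF grp gs mn cpt isolated_of_finite_returns[OF grp gs mn hd U ret]] .
  then show ?thesis using finite_group_of_finite_returns[OF grp gs _ x U(2) ret] by blast
qed

theorem proposition3p10:
  fixes G :: "'g monoid" and X :: "'x topology" and \<alpha> :: "'g \<Rightarrow> 'x \<Rightarrow> 'x"
    and \<iota> :: "('x \<Rightarrow> complex) \<Rightarrow> ('g \<Rightarrow> complex)"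
  assumes "group G"
    and "\<not> amenable G"
    and "furstenberg_boundary G X \<alpha>"
    and "upie_embedding G X \<alpha> \<iota>"
  shows "\<iota> ` Cfun X \<inter> c0 G = {(\<lambda>t. 0)}"
proof
  have "(\<lambda>x. 0) \<in> Cfun X" "(\<lambda>t. 0) \<in> c0 G" unfolding Cfun_def c0_def linf_def by auto
  then show "{\<lambda>t. 0} \<subseteq> \<iota> ` Cfun X \<inter> c0 G" using upie_zero[OF assms(4)] by force
next
  have bd: "gboundary G X \<alpha>" using assms(3) unfolding furstenberg_boundary_def by blast
  have infinite: "infinite (carrier G)" using finite_group_amenable[OF assms(1)] assms(2) by blast
  show "\<iota> ` Cfun X \<inter> c0 G \<subseteq> {\<lambda>t. 0}"
  proof
    fix \<phi> assume "\<phi> \<in> \<iota> ` Cfun X \<inter> c0 G"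
    then obtain f where f: "f \<in> Cfun X" and \<phi>: "\<phi> = \<iota> f" and c0: "\<iota> f \<in> c0 G" by blast
    have "f x = 0" for x
      using c0_element_forces_finite_group[OF assms(1) bd assms(4) f c0] infinite f
      unfolding Cfun_def by blast
    then have "f = (\<lambda>x. 0)" by blast
    then show "\<phi> \<in> {\<lambda>t. 0}" using \<phi> upie_zero[OF assms(4)] by simp
  qed
qed

end
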